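(* Let $n\ge5$, let $\Delta$ be a triangulation of the punctured $n$-gon $\mathcal{P}_n$ with quiver $Q_\Delta$, and let $\alpha\in\Delta$ be a diagonal which is not close to the border and which is not a diagonal between the puncture and the border. Then the quiver obtained from $Q_\Delta$ by factoring out the vertex $v_\alpha$ is disconnected.
   Context: $\mathcal{P}_n$ is a regular $n$-gon with one puncture in its center. For border vertices $a \neq b$, $\delta_{a,b}$ is the counterclockwise border path from $a$ to $b$ and $|\delta_{a,b}|$ the number of border vertices on it (including $a,b$); $\delta_{a,a}$ goes once around. A diagonal is an edge (homotopy class of non-self-crossing interior paths from $a$ to $b$ homotopic to $\delta_{a,b}$, with $|\delta_{a,b}|\ge3$) together with a tag $\epsilon\in\{\pm1\}$, with $\epsilon=1$ forced if $a\ne b$; edges with $a=b$ are drawn as arcs from the puncture to $a$ and called diagonals between the puncture and the border. Two puncture diagonals at $a,c$ with tags $\epsilon,\epsilon'$ cross iff $a\ne c$ and $\epsilon\ne\epsilon'$; otherwise crossing means intersecting in the interior for all representatives. A triangulation is a maximal set of pairwise non-crossing diagonals. A diagonal from $a$ to $b$, $a\ne b$, is close to the border if $|\delta_{a,b}|=3$. The quiver $Q_\Delta$ has a vertex $v_\beta$ for each $\beta\in\Delta$, an arrow between $v_\beta,v_\gamma$ when $\beta,\gamma$ bound a common triangle, oriented $v_\beta\to v_\gamma$ if $\gamma$ is obtained from $\beta$ by anticlockwise rotation about their common vertex (two diagonals from the puncture to the same vertex are treated as loops around the puncture, giving separate triangles), and with oriented $2$-cycles deleted. Factoring out a vertex means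 deleting it and all arrows incident to it. *)

theory Defs
  imports Main
begin

text \<open>Combinatorial model of the once-punctured regular n-gon P_n.
  Border vertices are 0, ..., n-1 in counterclockwise order; the border edge
  with index i joins vertex i to vertex (i+1) mod n.\<close>

text \<open>Ord a b (a \<noteq> b) is the edge from a to b homotopic to the
  counterclockwise border path delta_{a,b} (its tag is forced to be 1);
  Punc a e is the edge with a = b (drawn as an arc from the puncture to a)
  with tag e \<in> {1,-1}.\<close>
datatype diag = Ord nat nat | Punc nat int

definition ccw_dist :: "nat \<Rightarrow> nat \<Rightarrow> nat \<Rightarrow> nat" where
  "ccw_dist n a b = (b + n - a) mod n"

text \<open>|delta_{a,b}| for a \<noteq> b: number of border vertices on the path\<close>
definition path_card :: "nat \<Rightarrow> nat \<Rightarrow> nat \<Rightarrow> nat" where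
  "path_card n a b = ccw_dist n a b + 1"

text \<open>border edges (by index) traversed by delta_{a,b}\<close>
definition path_edges :: "nat \<Rightarrow> nat \<Rightarrow> nat \<Rightarrow> nat set" where
  "path_edges n a b = {(a + i) mod n | i. i < ccw_dist n a b}"

text \<open>border vertices strictly inside delta_{a,b}\<close>
definition path_inner :: "nat \<Rightarrow> nat \<Rightarrow> nat \<Rightarrow> nat set" where
  "path_inner n a b = {(a + i) mod n | i. 0 < i \<and> i < ccw_dist n a b}"

fun valid_diag :: "nat \<Rightarrow> diag \<Rightarrow> bool" where
  "valid_diag n (Ord a b) = (a < n \<and> b < n \<and> a \<noteq> b \<and> path_card n a b \<ge> 3)"
| "valid_diag n (Punc a e) = (a < n \<and> (e = 1 \<or> e = -1))"

text \<open>Two ordinary diagonals are non-crossing iff the border regions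
  they cut off (which do not contain the puncture) are nested or have disjoint
  border edges; a puncture diagonal at p crosses an ordinary diagonal (a,b) iff
  p lies strictly inside delta_{a,b}; two puncture diagonals cross iff their
  border vertices differ and their tags differ.\<close>
fun crosses :: "nat \<Rightarrow> diag \<Rightarrow> diag \<Rightarrow> bool" where
  "crosses n (Ord a b) (Ord c d) =
     (\<not> (path_edges n a b \<subseteq> path_edges n c d \<or> path_edges n c d \<subseteq> path_edges n a b
         \<or> path_edges n a b \<inter> path_edges n c d = {}))"
| "crosses n (Ord a b) (Punc p e) = (p \<in> path_inner n a b)"
| "crosses n (Punc p e) (Ord a b) = (p \<in> path_inner n a b)"
| "crosses n (Punc a e) (Punc c e') = (a \<noteq> c \<and> e \<noteq> e')"

definition triangulation :: "nat \<Rightarrow> diag set \<Rightarrow> bool" where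
  "triangulation n T \<longleftrightarrow>
     (\<forall>d\<in>T. valid_diag n d) \<and>
     (\<forall>d\<in>T. \<forall>d'\<in>T. \<not> crosses n d d') \<and>
     (\<forall>d. valid_diag n d \<and> d \<notin> T \<longrightarrow> (\<exists>d'\<in>T. crosses n d d'))"

fun close_to_border :: "nat \<Rightarrow> diag \<Rightarrow> bool" where
  "close_to_border n (Ord a b) = (path_card n a b = 3)"
| "close_to_border n (Punc a e) = False"

fun puncture_diag :: "diag \<Rightarrow> bool" where
  "puncture_diag (Ord a b) = False"
| "puncture_diag (Punc a e) = True"

text \<open>A side of a triangle from border vertex a to border vertex b (a \<noteq> b),
  lying along delta_{a,b}: either a diagonal of T or a border edge.\<close>
definition side_ok :: "nat \<Rightarrow> diag set \<Rightarrow> nat \<Rightarrow> nat \<Rightarrow> bool" where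
  "side_ok n T a b \<longleftrightarrow> Ord a b \<in> T \<or> (a < n \<and> b = (a + 1) mod n)"

text \<open>Triangles not having the puncture as a vertex: vertices x, y, z in
  counterclockwise order, sides (x,y), (y,z) and the outer side (x,z).  If x = z
  the outer side is a loop at x around the puncture: this happens exactly when
  both tagged puncture diagonals at x are in T, each of which is treated as such
  a loop (giving separate triangles).  Its anticlockwise-rotation arrows are
  (x,y) -> (x,z) -> (y,z) -> (x,y).\<close>
definition border_triangle :: "nat \<Rightarrow> diag set \<Rightarrow> diag \<Rightarrow> diag \<Rightarrow> diag \<Rightarrow> bool" where
  "border_triangle n T s1 s2 s3 \<longleftrightarrow>
     (\<exists>x y z. x < n \<and> y < n \<and> z < n \<and> x \<noteq> y \<and> y \<noteq> z \<and>
        s1 = Ord x y \<and> s2 = Ord y z \<and> side_ok n T x y \<and> side_ok n T y z \<and>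
        path_edges n x y \<inter> path_edges n y z = {} \<and>
        (if x \<noteq> z
         then s3 = Ord x z \<and> side_ok n T x z \<and>
              path_edges n x y \<union> path_edges n y z = path_edges n x z
         else (\<exists>e. s3 = Punc x e) \<and> s3 \<in> T \<and> Punc x 1 \<in> T \<and> Punc x (-1) \<in> T \<and>
              path_edges n x y \<union> path_edges n y z = {..<n}))"

text \<open>Triangles with the puncture as a vertex: puncture diagonals at p \<noteq> q with
  equal tag, and the side (p,q).  Arrows: P_p -> P_q -> (p,q) -> P_p.\<close>
definition puncture_triangle :: "nat \<Rightarrow> diag set \<Rightarrow> nat \<Rightarrow> nat \<Rightarrow> int \<Rightarrow> bool" where
  "puncture_triangle n T p q e \<longleftrightarrow>
     p \<noteq> q \<and> Punc p e \<in> T \<and> Punc q e \<in> T \<and> side_ok n T p q"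

text \<open>follows n T b c: b and c bound a common triangle and c is obtained from b
  by anticlockwise rotation about their common vertex.\<close>
definition follows :: "nat \<Rightarrow> diag set \<Rightarrow> diag \<Rightarrow> diag \<Rightarrow> bool" where
  "follows n T b c \<longleftrightarrow> b \<in> T \<and> c \<in> T \<and>
     ((\<exists>s1 s2 s3. border_triangle n T s1 s2 s3 \<and>
         ((b, c) = (s1, s3) \<or> (b, c) = (s3, s2) \<or> (b, c) = (s2, s1))) \<or>
      (\<exists>p q e. puncture_triangle n T p q e \<and>
         ((b, c) = (Punc p e, Punc q e) \<or> (b, c) = (Punc q e, Ord p q) \<or>
          (b, c) = (Ord p q, Punc p e))))"

text \<open>The quiver Q_T: vertices the diagonals of T, arrows from triangles, with
  oriented 2-cycles deleted.  (Arrows are recorded as a relation; multiplicities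
  play no role for connectedness.)\<close>
definition quiver :: "nat \<Rightarrow> diag set \<Rightarrow> diag set \<times> (diag \<times> diag) set" where
  "quiver n T = (T, {(b, c). follows n T b c \<and> \<not> follows n T c b})"

definition factor_out :: "'v set \<times> ('v \<times> 'v) set \<Rightarrow> 'v \<Rightarrow> 'v set \<times> ('v \<times> 'v) set" where
  "factor_out Q v = (fst Q - {v}, {(x, y) \<in> snd Q. x \<noteq> v \<and> y \<noteq> v})"

definition quiver_connected :: "'v set \<times> ('v \<times> 'v) set \<Rightarrow> bool" where
  "quiver_connected Q \<longleftrightarrow>
     (\<forall>x\<in>fst Q. \<forall>y\<in>fst Q. (x, y) \<in> ({(u, w) \<in> snd Q. u \<in> fst Q \<and> w \<in> fst Q}
                                      \<union> {(w, u) | u w. (u, w) \<in> snd Q \<and> u \<in> fst Q \<and> w \<in> fst Q})\<^sup>*)"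

definition quiver_disconnected :: "'v set \<times> ('v \<times> 'v) set \<Rightarrow> bool" where
  "quiver_disconnected Q \<longleftrightarrow> \<not> quiver_connected Q"

end

theory Submission
  imports Defs
begin

text \<open>The diagonal \<alpha> = (a, b) cuts off a region of P_n which does not contain the
  puncture; its border edges are those of delta_{a,b}.  The sides of a triangle of the
  triangulation are pairwise nested or disjoint with this region, and the sides of a triangle
  are the union of the other two, so a triangle with one side strictly inside the region lies
  entirely inside it.  Hence no arrow of the quiver that avoids v_\<alpha> joins a diagonal inside
  the region to one outside.  Both parts are nonempty: as |delta_{a,b}| \<ge> 4, the region
  contains a further diagonal (the short diagonal at a or one crossing it), and outside lies
  the puncture diagonal at a or a diagonal crossing it.\<close>

section \<open>Arcs of the border cycle\<close>

definition arc :: "nat \<Rightarrow> nat \<Rightarrow> nat \<Rightarrow> nat set" where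
  "arc n c d = {(c + i) mod n | i. i < d}"

lemma mod_add_left_cancel_less:
  fixes i j :: nat
  assumes "i < n" "j < n" "(c + i) mod n = (c + j) mod n"
  shows "i = j"
proof -
  have "i' = j'" if "i' \<le> j'" "j' < n" "(c + i') mod n = (c + j') mod n" for i' j' :: nat
  proof -
    have "n dvd j' - i'" using mod_eq_dvd_iff_nat[of "c + i'" "c + j'" n] that by simp
    thus ?thesis using that nat_dvd_not_less[of "j' - i'" n] by linarith
  qed
  thus ?thesis using assms by (metis nat_le_linear)
qed

lemma card_arc: "d \<le> n \<Longrightarrow> card (arc n c d) = d"
proof -
  assume "d \<le> n"
  have "inj_on (\<lambda>i. (c + i) mod n) {..<d}"
  proof (rule inj_onI)
    fix i j assume "i \<in> {..<d}" "j \<in> {..<d}" "(c + i) mod n = (c + j) mod n"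
    then show "i = j" using \<open>d \<le> n\<close> by (intro mod_add_left_cancel_less[of i n j c]) auto
  qed
  moreover have "arc n c d = (\<lambda>i. (c + i) mod n) ` {..<d}"
    unfolding arc_def by auto
  ultimately show ?thesis by (simp add: card_image)
qed

lemma pred_notin_arc: "d < n \<Longrightarrow> (c + (n - 1)) mod n \<notin> arc n c d"
proof
  assume "d < n" "(c + (n - 1)) mod n \<in> arc n c d"
  then obtain i where "i < d" "(c + i) mod n = (c + (n - 1)) mod n" unfolding arc_def by auto
  moreover have "i < n" "n - 1 < n" using \<open>d < n\<close> \<open>i < d\<close> by simp_all
  ultimately have "i = n - 1" using mod_add_left_cancel_less[of i n "n - 1" c] by blast
  with \<open>i < d\<close> \<open>d < n\<close> show False by linarith
qed

lemma pred_of_mod_add: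
  fixes c i n :: nat
  assumes "0 < i" "0 < n"
  shows "((c + i) mod n + (n - 1)) mod n = (c + (i - 1)) mod n"
proof -
  have "c + i + (n - 1) = c + (i - 1) + n" using assms by arith
  then have "((c + i) mod n + (n - 1)) mod n = (c + (i - 1) + n) mod n"
    by (metis mod_add_left_eq)
  then show ?thesis by simp
qed

text \<open>The length of an arc is its cardinality, and its start point is the only element
  whose predecessor it does not contain.\<close>

lemma arc_inject:
  assumes "c < n" "a < n" "0 < d" "d < n" "d' < n" and eq: "arc n c d = arc n a d'"
  shows "c = a \<and> d = d'"
proof -
  have "d = d'" using card_arc[of d n c] card_arc[of d' n a] eq assms(4,5) by simp
  have "(c + 0) mod n \<in> arc n c d" using assms(3) unfolding arc_def by blast
  hence "c \<in> arc n a d'" using assms(1) eq by simp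
  then obtain i where i: "i < d'" "c = (a + i) mod n" unfolding arc_def by blast
  have "i = 0"
  proof (rule ccontr)
    assume "i \<noteq> 0"
    hence "(c + (n - 1)) mod n = (a + (i - 1)) mod n"
      using i(2) pred_of_mod_add[of i n a] assms(2) by simp
    moreover have "i - 1 < d'" using i(1) by simp
    ultimately have "(c + (n - 1)) mod n \<in> arc n a d'" unfolding arc_def by blast
    thus False using pred_notin_arc[of d n c] eq assms(4) by simp
  qed
  thus ?thesis using i assms(2) \<open>d = d'\<close> by simp
qed

lemma path_edges_arc: "path_edges n a b = arc n a (ccw_dist n a b)"
  unfolding path_edges_def arc_def ..

lemma ccw_dist_bounds:
  assumes "c < n" "e < n" "c \<noteq> e"
  shows "0 < ccw_dist n c e \<and> ccw_dist n c e < n \<and> (c + ccw_dist n c e) mod n = e"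
proof (cases "c \<le> e")
  case True
  have "e + n - c = (e - c) + n" using True by simp
  hence "ccw_dist n c e = (e - c + n) mod n" unfolding ccw_dist_def by simp
  also have "\<dots> = e - c" using assms by simp
  finally show ?thesis using assms True by simp
next
  case False
  hence "ccw_dist n c e = e + n - c" using assms unfolding ccw_dist_def by simp
  moreover have "c + (e + n - c) = e + n" using False assms by simp
  ultimately show ?thesis using assms False by simp
qed

lemma valid_Ord_ccw_dist:
  "valid_diag n (Ord c e) \<Longrightarrow>
   c < n \<and> e < n \<and> c \<noteq> e \<and> 0 < ccw_dist n c e \<and> ccw_dist n c e < n \<and>
   (c + ccw_dist n c e) mod n = e"
  using ccw_dist_bounds[of c n e] by simp

lemma path_edges_inject:
  assumes "valid_diag n (Ord c e)" "valid_diag n (Ord a b)"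
    and "path_edges n c e = path_edges n a b"
  shows "c = a \<and> e = b"
  using arc_inject[of c n a "ccw_dist n c e" "ccw_dist n a b"] assms
    valid_Ord_ccw_dist[OF assms(1)] valid_Ord_ccw_dist[OF assms(2)]
  unfolding path_edges_arc by metis

lemma start_in_path_edges: "x < n \<Longrightarrow> y < n \<Longrightarrow> x \<noteq> y \<Longrightarrow> x \<in> path_edges n x y"
  using ccw_dist_bounds[of x n y] unfolding path_edges_def by force

lemma pred_notin_path_edges:
  "valid_diag n (Ord a b) \<Longrightarrow> (a + (n - 1)) mod n \<notin> path_edges n a b"
  using pred_notin_arc valid_Ord_ccw_dist unfolding path_edges_arc by blast

lemma path_edges_subset: "0 < n \<Longrightarrow> path_edges n x y \<subseteq> {..<n}"
  unfolding path_edges_def by auto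

lemma path_edges_Suc:
  assumes "x < n" "2 \<le> n"
  shows "path_edges n x ((x + 1) mod n) = {x}"
proof -
  have "x \<noteq> (x + 1) mod n"
    using assms mod_add_left_cancel_less[of 0 n 1 x] by auto
  hence "ccw_dist n x ((x + 1) mod n) = 1"
    using ccw_dist_bounds[of x n "(x + 1) mod n"] assms
    by (intro mod_add_left_cancel_less[of _ n 1 x]) auto
  thus ?thesis using assms unfolding path_edges_def by auto
qed

section \<open>Triangles relative to a region cut off by a diagonal\<close>

definition nested_or_disjoint :: "'a set \<Rightarrow> 'a set \<Rightarrow> bool" where
  "nested_or_disjoint X Y \<longleftrightarrow> X \<subseteq> Y \<or> Y \<subseteq> X \<or> X \<inter> Y = {}"

lemma nested_or_disjoint_union:
  assumes "E\<^sub>1 \<inter> E\<^sub>2 = {}" "E\<^sub>1 \<noteq> {}" "E\<^sub>2 \<noteq> {}"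
    and "nested_or_disjoint E\<^sub>1 A" "nested_or_disjoint E\<^sub>2 A" "nested_or_disjoint (E\<^sub>1 \<union> E\<^sub>2) A"
    and "X \<in> {E\<^sub>1, E\<^sub>2, E\<^sub>1 \<union> E\<^sub>2}" "X \<subset> A"
  shows "E\<^sub>1 \<union> E\<^sub>2 \<subseteq> A"
  using assms(7)
proof (elim insertE emptyE)
  assume "X = E\<^sub>1"
  then show ?thesis using assms(1-6,8) unfolding nested_or_disjoint_def by blast
next
  assume "X = E\<^sub>2"
  then show ?thesis using assms(1-6,8) unfolding nested_or_disjoint_def by blast
next
  assume "X = E\<^sub>1 \<union> E\<^sub>2"
  then show ?thesis using assms(8) by blast
qed

text \<open>A loop around the puncture, the outer side of a triangle with x = z, encloses the
  whole border.\<close>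

definition side_edges :: "nat \<Rightarrow> diag \<Rightarrow> nat set" where
  "side_edges n d = (case d of Ord c e \<Rightarrow> path_edges n c e | Punc p t \<Rightarrow> {..<n})"

definition inside_region :: "nat \<Rightarrow> nat set \<Rightarrow> diag \<Rightarrow> bool" where
  "inside_region n A d = (case d of Ord c e \<Rightarrow> path_edges n c e \<subseteq> A | Punc p t \<Rightarrow> False)"

lemma triangulation_noncrossing:
  "triangulation n T \<Longrightarrow> d \<in> T \<Longrightarrow> d' \<in> T \<Longrightarrow> \<not> crosses n d d'"
  unfolding triangulation_def by blast

lemma triangulation_valid: "triangulation n T \<Longrightarrow> d \<in> T \<Longrightarrow> valid_diag n d"
  unfolding triangulation_def by blast

lemma side_nested_or_disjoint:
  assumes "triangulation n T" "Ord a b \<in> T" "side_ok n T x y" "2 \<le> n"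
  shows "nested_or_disjoint (path_edges n x y) (path_edges n a b)"
proof (cases "Ord x y \<in> T")
  case True
  then show ?thesis using triangulation_noncrossing[OF assms(1) True assms(2)]
    unfolding nested_or_disjoint_def by auto
next
  case False
  hence "path_edges n x y = {x}"
    using assms(3,4) path_edges_Suc unfolding side_ok_def by blast
  then show ?thesis unfolding nested_or_disjoint_def by auto
qed

lemma inside_region_psubset:
  assumes tri: "triangulation n T" and "Ord a b \<in> T" "s \<in> T" "s \<noteq> Ord a b"
    and "inside_region n (path_edges n a b) s"
  shows "side_edges n s \<subset> path_edges n a b"
proof -
  obtain c e where Ord: "s = Ord c e" using assms(5) by (cases s) (auto simp: inside_region_def)
  have "path_edges n c e \<noteq> path_edges n a b"
    using path_edges_inject triangulation_valid[OF tri] assms(2-4) Ord by blast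
  then show ?thesis using assms(5) Ord unfolding side_edges_def inside_region_def by auto
qed

lemma inside_region_iff_side_edges:
  assumes "valid_diag n (Ord a b)"
  shows "inside_region n (path_edges n a b) s \<longleftrightarrow> side_edges n s \<subseteq> path_edges n a b"
proof (cases s)
  case (Ord c e)
  then show ?thesis by (simp add: inside_region_def side_edges_def)
next
  case (Punc p t)
  have "(a + (n - 1)) mod n \<in> {..<n} - path_edges n a b"
    using pred_notin_path_edges[OF assms] assms by auto
  then show ?thesis using Punc by (auto simp: inside_region_def side_edges_def)
qed

lemma border_triangle_inside:
  assumes tri: "triangulation n T" and al: "Ord a b \<in> T" and "2 \<le> n"
    and "border_triangle n T s\<^sub>1 s\<^sub>2 s\<^sub>3" "u \<in> {s\<^sub>1, s\<^sub>2, s\<^sub>3}" "v \<in> {s\<^sub>1, s\<^sub>2, s\<^sub>3}"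
    and "side_edges n u \<subset> path_edges n a b"
  shows "side_edges n v \<subseteq> path_edges n a b"
proof -
  obtain x y z where xyz: "x < n" "y < n" "z < n" "x \<noteq> y" "y \<noteq> z"
    "s\<^sub>1 = Ord x y" "s\<^sub>2 = Ord y z" "side_ok n T x y" "side_ok n T y z"
    "path_edges n x y \<inter> path_edges n y z = {}"
    and outer: "if x \<noteq> z
         then s\<^sub>3 = Ord x z \<and> side_ok n T x z \<and>
              path_edges n x y \<union> path_edges n y z = path_edges n x z
         else (\<exists>e. s\<^sub>3 = Punc x e) \<and> s\<^sub>3 \<in> T \<and> Punc x 1 \<in> T \<and> Punc x (-1) \<in> T \<and>
              path_edges n x y \<union> path_edges n y z = {..<n}"
    using assms(4) unfolding border_triangle_def by blast
  let ?A = "path_edges n a b" and ?E\<^sub>1 = "path_edges n x y" and ?E\<^sub>2 = "path_edges n y z"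
  have ne: "?E\<^sub>1 \<noteq> {}" "?E\<^sub>2 \<noteq> {}"
    using start_in_path_edges xyz by blast+
  have outer_side: "side_edges n s\<^sub>3 = ?E\<^sub>1 \<union> ?E\<^sub>2 \<and> nested_or_disjoint (?E\<^sub>1 \<union> ?E\<^sub>2) ?A"
  proof (cases "x = z")
    case True
    then obtain e where "s\<^sub>3 = Punc x e" "?E\<^sub>1 \<union> ?E\<^sub>2 = {..<n}" using outer by auto
    moreover have "?A \<subseteq> {..<n}" using path_edges_subset \<open>2 \<le> n\<close> by simp
    ultimately show ?thesis unfolding side_edges_def nested_or_disjoint_def by auto
  next
    case False
    then have "s\<^sub>3 = Ord x z" "side_ok n T x z" "?E\<^sub>1 \<union> ?E\<^sub>2 = path_edges n x z"
      using outer by auto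
    then show ?thesis
      using side_nested_or_disjoint[OF tri al _ \<open>2 \<le> n\<close>] unfolding side_edges_def by auto
  qed
  have sides: "side_edges n s\<^sub>1 = ?E\<^sub>1" "side_edges n s\<^sub>2 = ?E\<^sub>2" "side_edges n s\<^sub>3 = ?E\<^sub>1 \<union> ?E\<^sub>2"
    using xyz(6,7) outer_side unfolding side_edges_def by simp_all
  have "side_edges n u \<in> {?E\<^sub>1, ?E\<^sub>2, ?E\<^sub>1 \<union> ?E\<^sub>2}"
    using assms(5) sides by blast
  then have "?E\<^sub>1 \<union> ?E\<^sub>2 \<subseteq> ?A"
    using nested_or_disjoint_union[OF xyz(10) ne _ _ _ _ assms(7)] outer_side
      side_nested_or_disjoint[OF tri al xyz(8) \<open>2 \<le> n\<close>]
      side_nested_or_disjoint[OF tri al xyz(9) \<open>2 \<le> n\<close>]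
    by blast
  then show ?thesis using assms(6) sides by auto
qed

text \<open>The side (p, q) of a triangle at the puncture is never strictly inside the region:
  p and q lie on delta_{a,b} but not in its interior, since there the puncture diagonals at
  p and q would cross \<alpha>.\<close>

lemma puncture_triangle_side_outside:
  assumes tri: "triangulation n T" and al: "Ord a b \<in> T"
    and pq: "Ord p q \<in> T" "Ord p q \<noteq> Ord a b" and "Punc p e \<in> T" "Punc q e \<in> T"
  shows "\<not> path_edges n p q \<subseteq> path_edges n a b"
proof
  assume sub: "path_edges n p q \<subseteq> path_edges n a b"
  note va = valid_Ord_ccw_dist[OF triangulation_valid[OF tri al]]
  note vp = valid_Ord_ccw_dist[OF triangulation_valid[OF tri pq(1)]]
  let ?dA = "ccw_dist n a b" and ?d = "ccw_dist n p q"
  have p_out: "p \<notin> path_inner n a b" and q_out: "q \<notin> path_inner n a b"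
    using triangulation_noncrossing[OF tri al assms(5)] triangulation_noncrossing[OF tri al assms(6)]
    by simp_all
  obtain i where i: "i < ?dA" "p = (a + i) mod n"
    using sub start_in_path_edges[of p n q] vp unfolding path_edges_def by blast
  with p_out have "p = a" using va unfolding path_inner_def by (cases "i = 0") auto
  have "path_edges n p q \<noteq> path_edges n a b"
    using path_edges_inject triangulation_valid[OF tri] pq al by blast
  with sub have "card (path_edges n p q) < card (path_edges n a b)"
    using path_edges_subset[of n a b] va by (intro psubset_card_mono) (auto intro: finite_subset)
  hence "?d < ?dA" using card_arc[of ?d n p] card_arc[of ?dA n a] va vp
    unfolding path_edges_arc by simp
  moreover have "q = (a + ?d) mod n" using vp \<open>p = a\<close> by simp
  ultimately have "q \<in> path_inner n a b" using vp unfolding path_inner_def by blast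
  with q_out show False ..
qed

lemma follows_preserves_inside_region:
  assumes tri: "triangulation n T" and al: "Ord a b \<in> T" and "2 \<le> n"
    and f: "follows n T u v" and uv: "u \<noteq> Ord a b" "v \<noteq> Ord a b"
  shows "inside_region n (path_edges n a b) u \<longleftrightarrow> inside_region n (path_edges n a b) v"
proof -
  let ?A = "path_edges n a b"
  have "u \<in> T" "v \<in> T" using f unfolding follows_def by auto
  consider (border) s\<^sub>1 s\<^sub>2 s\<^sub>3 where "border_triangle n T s\<^sub>1 s\<^sub>2 s\<^sub>3"
      "u \<in> {s\<^sub>1, s\<^sub>2, s\<^sub>3}" "v \<in> {s\<^sub>1, s\<^sub>2, s\<^sub>3}"
    | (puncture) p q e where "puncture_triangle n T p q e"
      "(u, v) = (Punc p e, Punc q e) \<or> (u, v) = (Punc q e, Ord p q) \<or> (u, v) = (Ord p q, Punc p e)"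
    using f unfolding follows_def by blast
  then show ?thesis
  proof cases
    case border
    have "inside_region n ?A w'" if "inside_region n ?A w" "w \<in> {u, v}" "w' \<in> {u, v}" for w w'
    proof -
      have "w \<in> T" "w \<noteq> Ord a b"
        using that(2) \<open>u \<in> T\<close> \<open>v \<in> T\<close> uv by auto
      have "side_edges n w \<subset> ?A"
        using inside_region_psubset[OF tri al \<open>w \<in> T\<close> \<open>w \<noteq> Ord a b\<close> that(1)] .
      then have "side_edges n w' \<subseteq> ?A"
        using border_triangle_inside[OF tri al \<open>2 \<le> n\<close> border(1)] border(2,3) that(2,3)
        by blast
      then show ?thesis
        using inside_region_iff_side_edges[OF triangulation_valid[OF tri al]] by blast
    qed
    then show ?thesis by blast
  next
    case puncture
    have "\<not> inside_region n ?A (Ord p q)" if "Ord p q \<in> {u, v}"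
      using puncture_triangle_side_outside[OF tri al] puncture(1) that \<open>u \<in> T\<close> \<open>v \<in> T\<close> uv
      unfolding puncture_triangle_def inside_region_def by auto
    then show ?thesis using puncture(2) unfolding inside_region_def by auto
  qed
qed

section \<open>Diagonals on both sides of \<alpha>\<close>

lemma exists_diag_outside:
  assumes tri: "triangulation n T" and al: "Ord a b \<in> T"
  shows "\<exists>y\<in>T. y \<noteq> Ord a b \<and> \<not> inside_region n (path_edges n a b) y"
proof (cases "Punc a 1 \<in> T")
  case True
  then show ?thesis unfolding inside_region_def by force
next
  case False
  note va = triangulation_valid[OF tri al]
  have "valid_diag n (Punc a 1)" using va by simp
  then obtain d where d: "d \<in> T" "crosses n (Punc a 1) d"
    using tri False unfolding triangulation_def by blast
  show ?thesis
  proof (cases d)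
    case (Punc r t)
    then show ?thesis using d unfolding inside_region_def by force
  next
    case (Ord c e)
    text \<open>a lies in the interior of delta_{c,e}, so the border edge ending at a is on
      delta_{c,e} but not on delta_{a,b}.\<close>
    have "a \<in> path_inner n c e" using d Ord by simp
    then obtain i where i: "0 < i" "i < ccw_dist n c e" "a = (c + i) mod n"
      unfolding path_inner_def by blast
    moreover have "0 < n" using va by simp
    ultimately have "(a + (n - 1)) mod n = (c + (i - 1)) mod n" "i - 1 < ccw_dist n c e"
      using pred_of_mod_add[of i n c] by simp_all
    hence "(a + (n - 1)) mod n \<in> path_edges n c e" unfolding path_edges_def by blast
    hence "\<not> inside_region n (path_edges n a b) d"
      using pred_notin_path_edges[OF va] Ord unfolding inside_region_def by auto
    moreover have "d \<noteq> Ord a b" using calculation unfolding inside_region_def by auto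
    ultimately show ?thesis using d by blast
  qed
qed

lemma exists_diag_inside:
  assumes tri: "triangulation n T" and al: "Ord a b \<in> T" and "5 \<le> n"
    and "path_card n a b \<noteq> 3"
  shows "\<exists>x\<in>T. x \<noteq> Ord a b \<and> inside_region n (path_edges n a b) x"
proof -
  note va = triangulation_valid[OF tri al]
  note pa = valid_Ord_ccw_dist[OF va]
  let ?A = "path_edges n a b" and ?a\<^sub>2 = "(a + 2) mod n"
  have "3 \<le> ccw_dist n a b" using va assms(4) by (auto simp: path_card_def)
  have "?a\<^sub>2 \<noteq> a" using mod_add_left_cancel_less[of 0 n 2 a] pa \<open>5 \<le> n\<close> by auto
  hence d2: "ccw_dist n a ?a\<^sub>2 = 2"
    using ccw_dist_bounds[of a n ?a\<^sub>2] pa \<open>5 \<le> n\<close>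
    by (intro mod_add_left_cancel_less[of _ n 2 a]) auto
  have v: "valid_diag n (Ord a ?a\<^sub>2)" using pa \<open>?a\<^sub>2 \<noteq> a\<close> d2 by (simp add: path_card_def)
  have E_sub: "path_edges n a ?a\<^sub>2 \<subseteq> ?A"
    using \<open>3 \<le> ccw_dist n a b\<close> unfolding path_edges_def d2 by force
  have "Ord a ?a\<^sub>2 \<noteq> Ord a b" using assms(4) d2 unfolding path_card_def by auto
  show ?thesis
  proof (cases "Ord a ?a\<^sub>2 \<in> T")
    case True
    then show ?thesis using \<open>Ord a ?a\<^sub>2 \<noteq> Ord a b\<close> E_sub unfolding inside_region_def by auto
  next
    case False
    then obtain d where d: "d \<in> T" "crosses n (Ord a ?a\<^sub>2) d"
      using tri v unfolding triangulation_def by blast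
    show ?thesis
    proof (cases d)
      case (Punc r t)
      have "path_inner n a ?a\<^sub>2 \<subseteq> path_inner n a b"
        using \<open>3 \<le> ccw_dist n a b\<close> unfolding path_inner_def d2 by auto
      hence "crosses n (Ord a b) d" using d Punc by auto
      then show ?thesis using triangulation_noncrossing[OF tri al d(1)] by blast
    next
      case (Ord c e)
      text \<open>A diagonal crossing the short diagonal at a lies inside the region, since it
        cannot cross \<alpha>.\<close>
      have "\<not> nested_or_disjoint (path_edges n a ?a\<^sub>2) (path_edges n c e)"
        using d Ord unfolding nested_or_disjoint_def by simp
      moreover have "nested_or_disjoint (path_edges n c e) ?A"
        using triangulation_noncrossing[OF tri al d(1)] Ord
        unfolding nested_or_disjoint_def by auto
      ultimately have "path_edges n c e \<subseteq> ?A" "d \<noteq> Ord a b"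
        using E_sub Ord unfolding nested_or_disjoint_def by auto
      then show ?thesis using d Ord unfolding inside_region_def by auto
    qed
  qed
qed

lemma quiver_disconnectedI:
  assumes "x \<in> fst Q" "y \<in> fst Q" "P x" "\<not> P y"
    and "\<And>u w. (u, w) \<in> snd Q \<Longrightarrow> u \<in> fst Q \<Longrightarrow> w \<in> fst Q \<Longrightarrow> P u \<longleftrightarrow> P w"
  shows "quiver_disconnected Q"
proof -
  let ?R = "{(u, w) \<in> snd Q. u \<in> fst Q \<and> w \<in> fst Q}
            \<union> {(w, u) | u w. (u, w) \<in> snd Q \<and> u \<in> fst Q \<and> w \<in> fst Q}"
  have "P w" if "(x, w) \<in> ?R\<^sup>*" for w
    using that by (induction rule: rtrancl_induct) (use assms in blast)+
  then show ?thesis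
    using assms(1-4) unfolding quiver_disconnected_def quiver_connected_def by blast
qed

theorem lemma5p4:
  fixes n :: nat and T :: "diag set" and \<alpha> :: diag
  assumes "n \<ge> 5"
    and "triangulation n T"
    and "\<alpha> \<in> T"
    and "\<not> close_to_border n \<alpha>"
    and "\<not> puncture_diag \<alpha>"
  shows "quiver_disconnected (factor_out (quiver n T) \<alpha>)"
proof -
  obtain a b where ab: "\<alpha> = Ord a b" using assms(5) by (cases \<alpha>) auto
  have al: "Ord a b \<in> T" and long: "path_card n a b \<noteq> 3" using assms(3,4) ab by simp_all
  let ?inside = "inside_region n (path_edges n a b)"
  obtain x where "x \<in> T" "x \<noteq> \<alpha>" "?inside x"
    using exists_diag_inside[OF assms(2) al assms(1) long] ab by blast
  moreover obtain y where "y \<in> T" "y \<noteq> \<alpha>" "\<not> ?inside y"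
    using exists_diag_outside[OF assms(2) al] ab by blast
  moreover have "?inside u \<longleftrightarrow> ?inside w"
    if "(u, w) \<in> snd (factor_out (quiver n T) \<alpha>)" for u w
    using that follows_preserves_inside_region[OF assms(2) al, of u w] assms(1) ab
    unfolding factor_out_def quiver_def by auto
  ultimately show ?thesis
    by (intro quiver_disconnectedI[where P = ?inside]) (auto simp: factor_out_def quiver_def)
qed

end
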